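(* For every traditional polynomial scheme, there exists a constant $K>0$ and an FTP code such that the communication rate of the FTP code is higher than that of the traditional polynomial scheme, whenever the matrix dimensions $a$, $b$, and $c$ are such that $b \left( \frac{1}{a}+\frac{1}{c} \right) < K$.
   Context: Setting (secure distributed matrix multiplication): a user has matrices $A \in \mathbb{F}_q^{a \times b}$ and $B \in \mathbb{F}_q^{b \times c}$ and wishes to compute $AB$ with the help of $N$ honest-but-curious servers, such that no set of $T$ colluding servers learns any information about $A$ or $B$ ($T$-security). The matrices are partitioned by the inner product partitioning $A = \begin{bmatrix}A_1 & \cdots & A_L\end{bmatrix}$, $B^{\intercal} = \begin{bmatrix}B_1^{\intercal} & \cdots & B_L^{\intercal}\end{bmatrix}$ so that $AB = A_1B_1+\cdots+A_LB_L$ ($L$ is the partitioning parameter). A traditional polynomial scheme uses a polynomial $h(x)=f(x)g(x)$ whose coefficients encode the products $A_kB_\ell$; the user uploads evaluations $f(\alpha_i), g(\alpha_i)$ to Server $i$, each server computes $h(\alpha_i)$ and sends this full evaluation back, with the construction being $T$-secure and allowing the user to reconstruct $AB$ from all $N$ evaluations; its recovery threshold (number of servers) $N'$ satisfies $N'>L$. An FTP (field trace polynomial) code with partitioning parameter $L$ and security parameter $T$ works over $\mathbb{F}_q$ with $q=q_0^{p_1p_2\cdots p_L}$ for a prime power $q_0$ and primes $p_1<\cdots<p_L$; with $N_i = p_i + 2L + 2T - 2$ it uses $N_L$ servers, and instead of full evaluations the servers send field traces of (scaled) evaluations of $h$ to subfields; it is $T$-secure, decodable, and has total communication rate $\left(\frac{N_Lb}{L}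 \left( \frac{1}{a}+\frac{1}{c} \right)+\sum_{i=1}^L\frac{N_i}{p_i}\right)^{-1}$. The total communication rate of a scheme is the number of symbols of $AB$ divided by the total (upload plus download) communication cost. *)

theory Defs
  imports Complex_Main "HOL-Computational_Algebra.Primes"
begin

text \<open>A traditional polynomial scheme with partitioning parameter L, security
parameter T and recovery threshold N' (number of servers).  Only these parameters
matter for its communication cost: each of the N' servers receives
f(alpha_i) (an a x (b/L) matrix) and g(alpha_i) (a (b/L) x c matrix) and returns
h(alpha_i) (an a x c matrix).\<close>
definition trad_scheme :: "nat \<Rightarrow> nat \<Rightarrow> nat \<Rightarrow> bool" where
  "trad_scheme L T N' \<longleftrightarrow> L \<ge> 1 \<and> N' > L"

text \<open>Total communication rate: symbols of AB divided by upload plus download cost.\<close>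
definition trad_rate :: "nat \<Rightarrow> nat \<Rightarrow> nat \<Rightarrow> nat \<Rightarrow> nat \<Rightarrow> real" where
  "trad_rate L N' a b c =
     (real a * real c) /
     (real N' * (real a * real b / real L + real b * real c / real L)
      + real N' * (real a * real c))"

definition prime_power :: "nat \<Rightarrow> bool" where
  "prime_power q \<longleftrightarrow> (\<exists>r k. prime r \<and> k \<ge> 1 \<and> q = r ^ k)"

text \<open>FTP code with partitioning parameter L, security parameter T, base field size q0
(the code works over the field of size q0^(p_1 ... p_L)) and primes p_1 < ... < p_L
(given as p 1, ..., p L).\<close>
definition FTP_code :: "nat \<Rightarrow> nat \<Rightarrow> nat \<Rightarrow> (nat \<Rightarrow> nat) \<Rightarrow> bool" where
  "FTP_code L T q0 p \<longleftrightarrow> L \<ge> 1 \<and> prime_power q0 \<and>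
     (\<forall>i\<in>{1..L}. prime (p i)) \<and> strict_mono_on {1..L} p"

definition FTP_N :: "nat \<Rightarrow> nat \<Rightarrow> (nat \<Rightarrow> nat) \<Rightarrow> nat \<Rightarrow> nat" where
  "FTP_N L T p i = p i + 2 * L + 2 * T - 2"

definition FTP_rate :: "nat \<Rightarrow> nat \<Rightarrow> (nat \<Rightarrow> nat) \<Rightarrow> nat \<Rightarrow> nat \<Rightarrow> nat \<Rightarrow> real" where
  "FTP_rate L T p a b c =
     1 / (real (FTP_N L T p L) * real b / real L * (1 / real a + 1 / real c)
          + (\<Sum>i=1..L. real (FTP_N L T p i) / real (p i)))"

end

theory Submission
  imports Defs "HOL-Library.Infinite_Set"
begin

text \<open>Writing x = b (1/a + 1/c), the traditional scheme has rate
1 / (N' (x/L + 1)) and the FTP code has rate 1 / (N_L x/L + S) with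
S = (\<Sum>i. N_i / p_i).  Since N_i / p_i = 1 + (2L + 2T - 2) / p_i, choosing all primes
p_i larger than L (2L + 2T - 2) makes S < L + 1 \<le> N'.  Then for x below
K = (N' - S) L / N_L the FTP denominator stays below N', which is at most the
traditional denominator.\<close>

lemma infinite_primes_above: "infinite {q :: nat. prime q \<and> M < q}"
  unfolding infinite_nat_iff_unbounded
proof
  fix m
  obtain q :: nat where "prime q" "max m M < q"
    using bigger_prime by blast
  then show "\<exists>q>m. q \<in> {q. prime q \<and> M < q}" by auto
qed

lemma strict_mono_primes_above: "\<exists>p :: nat \<Rightarrow> nat. strict_mono p \<and> (\<forall>i. prime (p i) \<and> M < p i)"
proof (intro exI conjI allI)
  let ?P = "{q :: nat. prime q \<and> M < q}"
  show "strict_mono (enumerate ?P)"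
    using infinite_primes_above by (simp add: strict_mono_def)
  show "prime (enumerate ?P i)" "M < enumerate ?P i" for i
    using enumerate_in_set[OF infinite_primes_above] by auto
qed

lemma trad_rate_eq:
  assumes "a > 0" "c > 0" "L > 0"
  shows "trad_rate L N' a b c = 1 / (real N' * (real b * (1 / real a + 1 / real c) / real L + 1))"
  using assms unfolding trad_rate_def by (simp add: field_simps)

lemma FTP_N_eq: "L \<ge> 1 \<Longrightarrow> FTP_N L T p i = p i + (2 * L + 2 * T - 2)"
  unfolding FTP_N_def by simp

lemma FTP_N_ge: "L \<ge> 1 \<Longrightarrow> p i \<le> FTP_N L T p i"
  unfolding FTP_N_def by simp

lemma FTP_download_sum_pos:
  assumes "L \<ge> 1" "\<And>i. i \<in> {1..L} \<Longrightarrow> p i > 0"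
  shows "(\<Sum>i=1..L. real (FTP_N L T p i) / real (p i)) > 0"
proof (intro sum_pos divide_pos_pos)
  fix i
  assume "i \<in> {1..L}"
  then have "p i > 0"
    by (rule assms(2))
  then show "0 < real (p i)" "0 < real (FTP_N L T p i)"
    using FTP_N_ge[OF assms(1), of p i T] by simp_all
qed (use assms(1) in auto)

lemma FTP_download_sum_lt:
  assumes "\<And>i. i \<in> {1..L} \<Longrightarrow> L * (2 * L + 2 * T - 2) < p i"
  shows "(\<Sum>i=1..L. real (FTP_N L T p i) / real (p i)) < real L + 1"
proof (cases "L = 0")
  case False
  define D where "D = 2 * L + 2 * T - 2"
  have "real (FTP_N L T p i) / real (p i) < 1 + 1 / real L" if i: "i \<in> {1..L}" for i
  proof -
    have pD: "real L * real D < real (p i)"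
      using assms[OF i] unfolding D_def by (metis of_nat_less_iff of_nat_mult)
    moreover have p_pos: "real (p i) > 0"
      using assms[OF i] by linarith
    ultimately have "real D / real (p i) < 1 / real L"
      using False by (simp add: field_simps)
    moreover have "FTP_N L T p i = p i + D"
      using i FTP_N_eq unfolding D_def by simp
    ultimately show ?thesis
      using p_pos by (simp add: add_divide_distrib)
  qed
  then have "(\<Sum>i=1..L. real (FTP_N L T p i) / real (p i)) < (\<Sum>i=1..L. 1 + 1 / real L)"
    using False by (intro sum_strict_mono) auto
  also have "\<dots> = real L + 1"
    using False by (simp add: field_simps)
  finally show ?thesis .
qed simp

lemma prime_power_prime: "prime q \<Longrightarrow> prime_power q"
  unfolding prime_power_def by (intro exI[of _ q] exI[of _ 1]) simp

lemma FTP_code_strict_mono_primes: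
  assumes "L \<ge> 1" "prime_power q0" "strict_mono p" "\<And>i. prime (p i)"
  shows "FTP_code L T q0 p"
  using assms unfolding FTP_code_def by (simp add: strict_mono_on_def strict_mono_def)

lemma FTP_rate_gt_trad_rate:
  fixes L T N' a b c :: nat and p :: "nat \<Rightarrow> nat" and S x :: real
  defines "S \<equiv> \<Sum>i=1..L. real (FTP_N L T p i) / real (p i)"
    and "x \<equiv> real b * (1 / real a + 1 / real c)"
  assumes "a > 0" "c > 0" "L \<ge> 1" "\<And>i. i \<in> {1..L} \<Longrightarrow> p i > 0"
    and small: "x < (real N' - S) * real L / real (FTP_N L T p L)"
  shows "FTP_rate L T p a b c > trad_rate L N' a b c"
proof -
  let ?N = "real (FTP_N L T p L)"
  have "?N > 0"
    using assms(5,6) FTP_N_ge[OF assms(5), of p L T] by fastforce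
  then have "x * ?N < (real N' - S) * real L"
    using small by (simp add: pos_less_divide_eq)
  then have "?N * x / real L < real N' - S"
    using assms(5) by (simp add: pos_divide_less_eq mult.commute)
  moreover have "real N' \<le> real N' * (x / real L + 1)"
    unfolding x_def by (simp add: algebra_simps)
  moreover have "?N * x / real L + S > 0"
    using FTP_download_sum_pos[OF assms(5,6)] unfolding S_def x_def
    by (intro add_nonneg_pos) auto
  ultimately have "1 / (real N' * (x / real L + 1)) < 1 / (?N * x / real L + S)"
    by (intro frac_less2) linarith+
  moreover have "FTP_rate L T p a b c = 1 / (?N * x / real L + S)"
    unfolding FTP_rate_def S_def x_def by simp
  moreover have "trad_rate L N' a b c = 1 / (real N' * (x / real L + 1))"
    unfolding x_def using trad_rate_eq assms(3,4,5) by simp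
  ultimately show ?thesis
    by simp
qed

theorem theorem2:
  fixes L T N' :: nat
  assumes "trad_scheme L T N'"
  shows "\<exists>K::real. K > 0 \<and> (\<exists>q0 p. FTP_code L T q0 p \<and>
           (\<forall>a b c :: nat. a > 0 \<longrightarrow> b > 0 \<longrightarrow> c > 0 \<longrightarrow>
              real b * (1 / real a + 1 / real c) < K \<longrightarrow>
              FTP_rate L T p a b c > trad_rate L N' a b c))"
proof -
  have L: "L \<ge> 1" and N': "N' \<ge> L + 1"
    using assms by (auto simp: trad_scheme_def)
  obtain p :: "nat \<Rightarrow> nat" where p_mono: "strict_mono p"
    and "\<forall>i. prime (p i) \<and> L * (2 * L + 2 * T - 2) < p i"
    using strict_mono_primes_above by blast
  then have p_prime: "prime (p i)" and p_large: "L * (2 * L + 2 * T - 2) < p i" for i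
    by simp_all
  define S where "S = (\<Sum>i=1..L. real (FTP_N L T p i) / real (p i))"
  define K where "K = (real N' - S) * real L / real (FTP_N L T p L)"
  have "S < real L + 1"
    unfolding S_def by (rule FTP_download_sum_lt) (rule p_large)
  moreover have "FTP_N L T p L > 0"
    using FTP_N_ge[OF L, of p L T] prime_gt_0_nat[OF p_prime] by (meson less_le_trans)
  ultimately have "K > 0"
    unfolding K_def using L N' by (intro divide_pos_pos mult_pos_pos) simp_all
  moreover have "FTP_code L T 2 p"
    using L p_mono p_prime by (intro FTP_code_strict_mono_primes prime_power_prime) simp_all
  moreover have "FTP_rate L T p a b c > trad_rate L N' a b c"
    if "a > 0" "c > 0" "real b * (1 / real a + 1 / real c) < K" for a b c
    using that L prime_gt_0_nat[OF p_prime] unfolding K_def S_def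
    by (intro FTP_rate_gt_trad_rate) simp_all
  ultimately show ?thesis
    by blast
qed

end
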